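(* Let $\mathcal{F}=(W,R)$ be a finite transitive frame and let $X_\mathcal{F}$ and $f:X_\mathcal{F}\to W$ be constructed as described in the context (for any admissible choice of the spaces $X_C$). Then $f$ is a $d$-morphism from $X_\mathcal{F}$ onto $\mathcal{F}$.
   Context: For a topological space $X$ and $Y\subseteq X$: $\mathrm{cl}_X Y$ is the closure; a point $x$ is a limit point of $Y$ if every set $O-\{x\}$ with $O$ an open neighbourhood of $x$ meets $Y$; $\mathrm{d}_X Y$ (the derived set) is the set of limit points of $Y$. $Y$ is dense in $X$ if $\mathrm{cl}_XY=X$. A subset $S$ is crowded in $X$ if $S\subseteq \mathrm{d}_X S$ (i.e. $S$ has no isolated points as a subspace). A partition of $X$ into cells is dense (resp. crowded) if every cell is dense in $X$ (resp. crowded). Frames: $\mathcal{F}=(W,R)$ with $R$ transitive. $R^*$ is the reflexive closure of $R$. A cluster is an equivalence class of the relation $\{(x,y): x=y \text{ or } xRyRx\}$; the cluster of $x$ is $C_x$. A cluster $C_x$ is degenerate if $x$ is irreflexive (then $C_x=\{x\}$), otherwise non-degenerate. $R$ lifts to clusters by $C_xRC_y$ iff $xRy$. Write $CR^{\uparrow}C'$ if $CRC'$ but not $C'RC$. The Alexandrov space $W_R$ is $W$ with topology whose open sets are the $R$-up-sets (sets $O$ with $w\in O, wRv\Rightarrow v\in O$). A $d$-morphism from a space $X$ to a transitive frame $\mathcal{F}=(W,R)$ is a function $f:X\to W$ such that (i) $f$ is continuous and open as a map $X\to W_R$; (ii) if $w$ is $R$-reflexive then $f^{-1}\{w\}$ is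 crowded in $X$; (iii) if $w$ is $R$-irreflexive then $f^{-1}\{w\}\cap \mathrm{d}_X f^{-1}\{w\}=\emptyset$. Construction of $X_\mathcal{F}$: let $\mathcal{F}=(W,R)$ be finite transitive with set of clusters $\mathscr{C}$. For each $C\in\mathscr{C}$ choose a space $X_C$ with a partition $\{X_w:w\in C\}$: if $C=\{w\}$ is degenerate, $X_C=X_w=\{w\}$ (one-point space); if $C=\{w_1,\dots,w_k\}$ is non-degenerate, $X_C$ is a space with a crowded dense $k$-partition whose cells are labelled $X_{w_1},\dots,X_{w_k}$. The $X_C$ are pairwise disjoint. Let $X_\mathcal{F}=\bigcup_{C\in\mathscr{C}}X_C$, where $O\subseteq X_\mathcal{F}$ is open iff for every $C\in\mathscr{C}$, $O\cap X_C$ is open in $X_C$, and if $O\cap X_C\neq\emptyset$ then $X_{C'}\subseteq O$ for every $C'$ with $CR^\uparrow C'$. Define $f:X_\mathcal{F}\to W$ by $f(x)=w$ iff $x\in X_w$. *)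

theory Defs
  imports "HOL-Analysis.Analysis"
begin

definition trans_frame :: "'w set \<Rightarrow> ('w \<Rightarrow> 'w \<Rightarrow> bool) \<Rightarrow> bool" where
  "trans_frame W R \<longleftrightarrow> (\<forall>x y. R x y \<longrightarrow> x \<in> W \<and> y \<in> W) \<and>
     (\<forall>x y z. R x y \<longrightarrow> R y z \<longrightarrow> R x z)"

definition cluster_of :: "'w set \<Rightarrow> ('w \<Rightarrow> 'w \<Rightarrow> bool) \<Rightarrow> 'w \<Rightarrow> 'w set" where
  "cluster_of W R x = {y \<in> W. y = x \<or> (R x y \<and> R y x)}"

definition clusters :: "'w set \<Rightarrow> ('w \<Rightarrow> 'w \<Rightarrow> bool) \<Rightarrow> 'w set set" where
  "clusters W R = cluster_of W R ` W"

text \<open>Lifted relation on clusters: C_x R C_y iff xRy (well defined by transitivity).\<close>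
definition cluster_rel :: "('w \<Rightarrow> 'w \<Rightarrow> bool) \<Rightarrow> 'w set \<Rightarrow> 'w set \<Rightarrow> bool" where
  "cluster_rel R C C' \<longleftrightarrow> (\<exists>x\<in>C. \<exists>y\<in>C'. R x y)"

definition cluster_rel_strict :: "('w \<Rightarrow> 'w \<Rightarrow> bool) \<Rightarrow> 'w set \<Rightarrow> 'w set \<Rightarrow> bool" where
  "cluster_rel_strict R C C' \<longleftrightarrow> cluster_rel R C C' \<and> \<not> cluster_rel R C' C"

definition alexandrov_top :: "'w set \<Rightarrow> ('w \<Rightarrow> 'w \<Rightarrow> bool) \<Rightarrow> 'w topology" where
  "alexandrov_top W R = topology (\<lambda>U. U \<subseteq> W \<and> (\<forall>w v. w \<in> U \<longrightarrow> R w v \<longrightarrow> v \<in> U))"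

definition crowded_in :: "'a topology \<Rightarrow> 'a set \<Rightarrow> bool" where
  "crowded_in X S \<longleftrightarrow> S \<subseteq> X derived_set_of S"

definition d_morphism :: "'a topology \<Rightarrow> 'w set \<Rightarrow> ('w \<Rightarrow> 'w \<Rightarrow> bool) \<Rightarrow> ('a \<Rightarrow> 'w) \<Rightarrow> bool" where
  "d_morphism X W R f \<longleftrightarrow>
     continuous_map X (alexandrov_top W R) f \<and>
     open_map X (alexandrov_top W R) f \<and>
     (\<forall>w\<in>W. R w w \<longrightarrow> crowded_in X {x \<in> topspace X. f x = w}) \<and>
     (\<forall>w\<in>W. \<not> R w w \<longrightarrow>
        {x \<in> topspace X. f x = w} \<inter> X derived_set_of {x \<in> topspace X. f x = w} = {})"

text \<open>Cells: X w for w in W (pairwise disjoint); for a cluster C, the space X_C is the topology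
  T C whose carrier is the union of the cells X w, w in C.\<close>
definition admissible_choice ::
  "'w set \<Rightarrow> ('w \<Rightarrow> 'w \<Rightarrow> bool) \<Rightarrow> ('w \<Rightarrow> 'a set) \<Rightarrow> ('w set \<Rightarrow> 'a topology) \<Rightarrow> bool" where
  "admissible_choice W R X T \<longleftrightarrow>
     (\<forall>v\<in>W. \<forall>w\<in>W. v \<noteq> w \<longrightarrow> X v \<inter> X w = {}) \<and>
     (\<forall>C\<in>clusters W R. topspace (T C) = (\<Union>w\<in>C. X w)) \<and>
     (\<forall>w\<in>W. \<not> R w w \<longrightarrow> (\<exists>a. X w = {a})) \<and>
     (\<forall>w\<in>W. R w w \<longrightarrow>
        X w \<noteq> {} \<and>
        (T (cluster_of W R w)) closure_of (X w) = topspace (T (cluster_of W R w)) \<and>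
        crowded_in (T (cluster_of W R w)) (X w))"

definition XF_open ::
  "'w set \<Rightarrow> ('w \<Rightarrow> 'w \<Rightarrow> bool) \<Rightarrow> ('w \<Rightarrow> 'a set) \<Rightarrow> ('w set \<Rightarrow> 'a topology) \<Rightarrow> 'a set \<Rightarrow> bool" where
  "XF_open W R X T U \<longleftrightarrow>
     U \<subseteq> (\<Union>C\<in>clusters W R. topspace (T C)) \<and>
     (\<forall>C\<in>clusters W R.
        openin (T C) (U \<inter> topspace (T C)) \<and>
        (U \<inter> topspace (T C) \<noteq> {} \<longrightarrow>
           (\<forall>C'\<in>clusters W R. cluster_rel_strict R C C' \<longrightarrow> topspace (T C') \<subseteq> U)))"

definition XF_top ::
  "'w set \<Rightarrow> ('w \<Rightarrow> 'w \<Rightarrow> bool) \<Rightarrow> ('w \<Rightarrow> 'a set) \<Rightarrow> ('w set \<Rightarrow> 'a topology) \<Rightarrow> 'a topology" where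
  "XF_top W R X T = topology (XF_open W R X T)"

definition XF_map :: "'w set \<Rightarrow> ('w \<Rightarrow> 'a set) \<Rightarrow> 'a \<Rightarrow> 'w" where
  "XF_map W X x = (THE w. w \<in> W \<and> x \<in> X w)"

end

theory Submission
  imports Defs
begin

text \<open>
  An up-set of \<open>R\<close> contains every cluster it meets, and \<open>f\<close> maps the block \<open>X\<^sub>C\<close> onto \<open>C\<close>;
  hence the preimage of an up-set is a union of whole blocks that contains every strictly later
  block, which is exactly an open set of \<open>X\<^sub>\<F>\<close>. Conversely an open set containing a point of
  the cell \<open>X\<^sub>w\<close> contains every block strictly above \<open>C\<^sub>w\<close> and, the cells of \<open>C\<^sub>w\<close> being dense
  in \<open>X\<^sub>C\<^sub>w\<close>, meets every cell of \<open>C\<^sub>w\<close>; so \<open>f\<close> is open. Every open set of \<open>X\<^sub>\<F>\<close> traces an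
  open set on \<open>X\<^sub>C\<close>, so cells that are crowded in \<open>X\<^sub>C\<close> stay crowded in \<open>X\<^sub>\<F>\<close>, while the
  fibre of an irreflexive point is a single point.
\<close>

lemma openin_alexandrov_top:
  "openin (alexandrov_top W R) U \<longleftrightarrow> U \<subseteq> W \<and> (\<forall>w v. w \<in> U \<longrightarrow> R w v \<longrightarrow> v \<in> U)"
proof -
  have "istopology (\<lambda>U. U \<subseteq> W \<and> (\<forall>w v. w \<in> U \<longrightarrow> R w v \<longrightarrow> v \<in> U))"
    unfolding istopology_def by blast
  then show ?thesis
    unfolding alexandrov_top_def by simp
qed

lemma topspace_alexandrov_top:
  assumes "\<And>w v. w \<in> W \<Longrightarrow> R w v \<Longrightarrow> v \<in> W"
  shows "topspace (alexandrov_top W R) = W"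
proof -
  have "openin (alexandrov_top W R) W"
    using assms by (simp add: openin_alexandrov_top)
  then have "W \<subseteq> topspace (alexandrov_top W R)"
    by (rule openin_subset)
  moreover have "topspace (alexandrov_top W R) \<subseteq> W"
    by (auto simp: topspace_def openin_alexandrov_top)
  ultimately show ?thesis
    by (rule subset_antisym[rotated])
qed

lemma not_in_derived_set_of_sing: "a \<notin> X derived_set_of {a}"
  by (auto simp: in_derived_set_of)

lemma crowded_in_subspace_coarser:
  assumes "topspace Z \<subseteq> topspace Y"
    and "\<And>U. openin Y U \<Longrightarrow> openin Z (U \<inter> topspace Z)"
    and "S \<subseteq> topspace Z" and "crowded_in Z S"
  shows "crowded_in Y S"
  unfolding crowded_in_def
proof
  fix x assume "x \<in> S"
  then have x: "x \<in> Z derived_set_of S"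
    using assms(4) by (auto simp: crowded_in_def)
  show "x \<in> Y derived_set_of S"
    unfolding in_derived_set_of
  proof (intro conjI allI impI)
    show "x \<in> topspace Y"
      using \<open>x \<in> S\<close> assms(1,3) by blast
    fix U assume "x \<in> U \<and> openin Y U"
    then have "x \<in> U \<inter> topspace Z" "openin Z (U \<inter> topspace Z)"
      using \<open>x \<in> S\<close> assms(2,3) by auto
    then show "\<exists>y\<noteq>x. y \<in> S \<and> y \<in> U"
      using x unfolding in_derived_set_of by blast
  qed
qed

lemma cluster_of_self: "w \<in> W \<Longrightarrow> w \<in> cluster_of W R w"
  by (simp add: cluster_of_def)

lemma cluster_of_subset: "cluster_of W R w \<subseteq> W"
  by (auto simp: cluster_of_def)

lemma cluster_of_in_clusters: "w \<in> W \<Longrightarrow> cluster_of W R w \<in> clusters W R"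
  by (simp add: clusters_def)

lemma cluster_of_eq:
  "trans_frame W R \<Longrightarrow> v \<in> cluster_of W R w \<Longrightarrow> cluster_of W R v = cluster_of W R w"
  unfolding cluster_of_def trans_frame_def by blast

lemma cluster_of_subset_up_set:
  "(\<forall>w v. w \<in> U \<longrightarrow> R w v \<longrightarrow> v \<in> U) \<Longrightarrow> v \<in> U \<Longrightarrow> cluster_of W R v \<subseteq> U"
  unfolding cluster_of_def by blast

lemma cluster_rel_strict_cluster_of:
  assumes "trans_frame W R" and "v \<in> W" and "w \<in> W"
  shows "cluster_rel_strict R (cluster_of W R v) (cluster_of W R w) \<longleftrightarrow> R v w \<and> \<not> R w v"
proof -
  have "cluster_rel R (cluster_of W R a) (cluster_of W R b) \<longleftrightarrow> R a b"
    if "a \<in> W" "b \<in> W" for a b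
    using assms(1) that unfolding cluster_rel_def cluster_of_def trans_frame_def by blast
  then show ?thesis
    using assms(2,3) by (simp add: cluster_rel_strict_def)
qed

lemma XF_open_trace:
  "XF_open W R X T U \<Longrightarrow> C \<in> clusters W R \<Longrightarrow> openin (T C) (U \<inter> topspace (T C))"
  unfolding XF_open_def by blast

lemma XF_open_contains_later_blocks:
  "XF_open W R X T U \<Longrightarrow> C \<in> clusters W R \<Longrightarrow> U \<inter> topspace (T C) \<noteq> {} \<Longrightarrow>
    C' \<in> clusters W R \<Longrightarrow> cluster_rel_strict R C C' \<Longrightarrow> topspace (T C') \<subseteq> U"
  unfolding XF_open_def by blast

lemma openin_XF_top: "openin (XF_top W R X T) U \<longleftrightarrow> XF_open W R X T U"
proof -
  have "istopology (XF_open W R X T)"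
    unfolding istopology_def
  proof (intro conjI allI impI)
    fix S U assume S: "XF_open W R X T S" and U: "XF_open W R X T U"
    show "XF_open W R X T (S \<inter> U)"
      unfolding XF_open_def
    proof (intro conjI ballI impI)
      fix C assume "C \<in> clusters W R"
      then have "openin (T C) ((S \<inter> topspace (T C)) \<inter> (U \<inter> topspace (T C)))"
        using S U by (intro openin_Int XF_open_trace)
      then show "openin (T C) (S \<inter> U \<inter> topspace (T C))"
        by (simp add: Int_ac)
    next
      fix C C' assume C: "C \<in> clusters W R" "S \<inter> U \<inter> topspace (T C) \<noteq> {}"
        and C': "C' \<in> clusters W R" "cluster_rel_strict R C C'"
      have "S \<inter> topspace (T C) \<noteq> {}" "U \<inter> topspace (T C) \<noteq> {}"
        using C(2) by blast+
      then show "topspace (T C') \<subseteq> S \<inter> U"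
        using XF_open_contains_later_blocks[OF S C(1) _ C'] XF_open_contains_later_blocks[OF U C(1) _ C']
        by blast
    qed (use S in \<open>auto simp: XF_open_def\<close>)
  next
    fix K assume K: "\<forall>S\<in>K. XF_open W R X T S"
    show "XF_open W R X T (\<Union>K)"
      unfolding XF_open_def
    proof (intro conjI ballI impI)
      show "\<Union>K \<subseteq> (\<Union>C\<in>clusters W R. topspace (T C))"
        using K unfolding XF_open_def by blast
    next
      fix C assume "C \<in> clusters W R"
      have "\<Union>K \<inter> topspace (T C) = (\<Union>S\<in>K. S \<inter> topspace (T C))"
        by blast
      also have "openin (T C) \<dots>"
        using K \<open>C \<in> clusters W R\<close> by (intro openin_Union) (auto intro: XF_open_trace)
      finally show "openin (T C) (\<Union>K \<inter> topspace (T C))" .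
    next
      fix C C' assume C: "C \<in> clusters W R" "\<Union>K \<inter> topspace (T C) \<noteq> {}"
        and C': "C' \<in> clusters W R" "cluster_rel_strict R C C'"
      obtain S where S: "S \<in> K" "S \<inter> topspace (T C) \<noteq> {}"
        using C(2) by blast
      then have "XF_open W R X T S"
        using K by blast
      then have "topspace (T C') \<subseteq> S"
        using C(1) S(2) C' by (rule XF_open_contains_later_blocks)
      with S(1) show "topspace (T C') \<subseteq> \<Union>K"
        by blast
    qed
  qed
  then show ?thesis
    unfolding XF_top_def by simp
qed

lemma topspace_XF_top: "topspace (XF_top W R X T) = (\<Union>C\<in>clusters W R. topspace (T C))"
proof -
  have "(\<Union>C\<in>clusters W R. topspace (T C)) \<inter> topspace (T C) = topspace (T C)"
    if "C \<in> clusters W R" for C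
    using that by blast
  then have "openin (XF_top W R X T) (\<Union>C\<in>clusters W R. topspace (T C))"
    unfolding openin_XF_top XF_open_def by auto
  then have "(\<Union>C\<in>clusters W R. topspace (T C)) \<subseteq> topspace (XF_top W R X T)"
    by (rule openin_subset)
  moreover have "topspace (XF_top W R X T) \<subseteq> (\<Union>C\<in>clusters W R. topspace (T C))"
    using openin_topspace[of "XF_top W R X T"] unfolding openin_XF_top XF_open_def by blast
  ultimately show ?thesis
    by (rule subset_antisym[rotated])
qed

locale XF_construction =
  fixes W :: "'w set" and R :: "'w \<Rightarrow> 'w \<Rightarrow> bool"
    and X :: "'w \<Rightarrow> 'a set" and T :: "'w set \<Rightarrow> 'a topology"
  assumes trans_frame: "trans_frame W R"
    and admissible: "admissible_choice W R X T"
begin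

abbreviation XF :: "'a topology" where "XF \<equiv> XF_top W R X T"

abbreviation f :: "'a \<Rightarrow> 'w" where "f \<equiv> XF_map W X"

lemma R_in_W: "R v w \<Longrightarrow> v \<in> W \<and> w \<in> W"
  using trans_frame by (simp add: trans_frame_def)

lemma R_trans: "R u v \<Longrightarrow> R v w \<Longrightarrow> R u w"
  using trans_frame unfolding trans_frame_def by blast

lemma cells_disjoint: "v \<in> W \<Longrightarrow> w \<in> W \<Longrightarrow> v \<noteq> w \<Longrightarrow> X v \<inter> X w = {}"
  using admissible by (simp add: admissible_choice_def)

lemma topspace_block:
  "w \<in> W \<Longrightarrow> topspace (T (cluster_of W R w)) = (\<Union>v\<in>cluster_of W R w. X v)"
  using admissible cluster_of_in_clusters[of w W R] unfolding admissible_choice_def by blast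

lemma cell_nonempty: "w \<in> W \<Longrightarrow> X w \<noteq> {}"
  using admissible unfolding admissible_choice_def by force

lemma cell_singleton: "w \<in> W \<Longrightarrow> \<not> R w w \<Longrightarrow> \<exists>a. X w = {a}"
  using admissible by (simp add: admissible_choice_def)

lemma cell_dense:
  "w \<in> W \<Longrightarrow> R w w \<Longrightarrow>
    T (cluster_of W R w) closure_of X w = topspace (T (cluster_of W R w))"
  using admissible by (simp add: admissible_choice_def)

lemma cell_crowded: "w \<in> W \<Longrightarrow> R w w \<Longrightarrow> crowded_in (T (cluster_of W R w)) (X w)"
  using admissible by (simp add: admissible_choice_def)

lemma XF_map_eq: "w \<in> W \<Longrightarrow> x \<in> X w \<Longrightarrow> f x = w"
  unfolding XF_map_def by (rule the_equality) (use cells_disjoint in blast)+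

lemma blocks_cover: "(\<Union>C\<in>clusters W R. topspace (T C)) = (\<Union>w\<in>W. X w)"
proof -
  have "(\<Union>C\<in>clusters W R. topspace (T C)) = (\<Union>w\<in>W. \<Union>v\<in>cluster_of W R w. X v)"
    by (simp add: clusters_def topspace_block)
  also have "\<dots> = (\<Union>w\<in>W. X w)"
    using cluster_of_subset[of W R] by (auto intro: cluster_of_self)
  finally show ?thesis .
qed

lemma topspace_XF: "topspace XF = (\<Union>w\<in>W. X w)"
  by (simp add: topspace_XF_top blocks_cover)

lemma fibre_XF_map: "w \<in> W \<Longrightarrow> {x \<in> topspace XF. f x = w} = X w"
  using XF_map_eq by (auto simp: topspace_XF)

lemma XF_map_image: "f ` topspace XF = W"
  using XF_map_eq cell_nonempty by (fastforce simp: topspace_XF)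

lemma mem_topspace_block_iff:
  assumes "v \<in> W" "w \<in> W" "x \<in> X v"
  shows "x \<in> topspace (T (cluster_of W R w)) \<longleftrightarrow> v \<in> cluster_of W R w"
proof
  assume "x \<in> topspace (T (cluster_of W R w))"
  then obtain u where u: "u \<in> cluster_of W R w" "x \<in> X u"
    using assms(2) by (auto simp: topspace_block)
  then have "u \<in> W"
    using cluster_of_subset by fast
  then have "u = v"
    using cells_disjoint[of u v] assms(1,3) u(2) by blast
  with u(1) show "v \<in> cluster_of W R w"
    by simp
qed (use assms in \<open>auto simp: topspace_block\<close>)

lemma up_set_meeting_block:
  assumes "U \<subseteq> W" and up: "\<forall>w v. w \<in> U \<longrightarrow> R w v \<longrightarrow> v \<in> U" and "w \<in> W"
    and "(\<Union>u\<in>U. X u) \<inter> topspace (T (cluster_of W R w)) \<noteq> {}"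
  shows "cluster_of W R w \<subseteq> U"
proof -
  obtain u x where "u \<in> U" "x \<in> X u" "x \<in> topspace (T (cluster_of W R w))"
    using assms(4) by blast
  then have "u \<in> cluster_of W R w"
    using mem_topspace_block_iff assms(1,3) by blast
  then have "cluster_of W R w = cluster_of W R u"
    using cluster_of_eq trans_frame by metis
  then show ?thesis
    using cluster_of_subset_up_set[OF up \<open>u \<in> U\<close>] by simp
qed

lemma XF_open_up_set_preimage:
  assumes "U \<subseteq> W" and up: "\<forall>w v. w \<in> U \<longrightarrow> R w v \<longrightarrow> v \<in> U"
  shows "XF_open W R X T (\<Union>w\<in>U. X w)"
  unfolding XF_open_def
proof (intro conjI ballI impI)
  show "(\<Union>w\<in>U. X w) \<subseteq> (\<Union>C\<in>clusters W R. topspace (T C))"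
    using assms(1) by (auto simp: blocks_cover)
next
  fix C assume "C \<in> clusters W R"
  then obtain w where w: "w \<in> W" "C = cluster_of W R w"
    by (auto simp: clusters_def)
  show "openin (T C) ((\<Union>w\<in>U. X w) \<inter> topspace (T C))"
  proof (cases "(\<Union>w\<in>U. X w) \<inter> topspace (T C) = {}")
    case False
    then have "C \<subseteq> U"
      using up_set_meeting_block[OF assms] w by blast
    then have "(\<Union>w\<in>U. X w) \<inter> topspace (T C) = topspace (T C)"
      using w by (auto simp: topspace_block)
    then show ?thesis
      by simp
  qed simp
next
  fix C C' assume "C \<in> clusters W R" and meets: "(\<Union>w\<in>U. X w) \<inter> topspace (T C) \<noteq> {}"
    and "C' \<in> clusters W R" and strict: "cluster_rel_strict R C C'"
  then obtain w w' where w: "w \<in> W" "C = cluster_of W R w" and w': "w' \<in> W" "C' = cluster_of W R w'"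
    by (auto simp: clusters_def)
  have "cluster_of W R w \<subseteq> U"
    using up_set_meeting_block[OF assms w(1)] meets w(2) by simp
  then have "w \<in> U"
    using cluster_of_self[OF w(1)] by blast
  moreover have "R w w'"
    using strict w w' by (simp add: cluster_rel_strict_cluster_of[OF trans_frame])
  ultimately have "w' \<in> U"
    using up by blast
  then have "C' \<subseteq> U"
    using cluster_of_subset_up_set[OF up] w'(2) by blast
  then show "topspace (T C') \<subseteq> (\<Union>w\<in>U. X w)"
    using w' by (auto simp: topspace_block)
qed

lemma continuous_map_XF_map: "continuous_map XF (alexandrov_top W R) f"
  unfolding continuous_map
proof (intro conjI allI impI)
  show "f ` topspace XF \<subseteq> topspace (alexandrov_top W R)"
    using R_in_W by (simp add: XF_map_image topspace_alexandrov_top)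
next
  fix U assume "openin (alexandrov_top W R) U"
  then have U: "U \<subseteq> W" "\<forall>w v. w \<in> U \<longrightarrow> R w v \<longrightarrow> v \<in> U"
    by (simp_all add: openin_alexandrov_top)
  then have "{x \<in> topspace XF. f x \<in> U} = (\<Union>w\<in>U. X w)"
    using XF_map_eq by (auto simp: topspace_XF)
  then show "openin XF {x \<in> topspace XF. f x \<in> U}"
    using XF_open_up_set_preimage[OF U] by (simp add: openin_XF_top)
qed

lemma open_set_meets_successor_cells:
  assumes U: "openin XF U" and "x \<in> U" and "R (f x) v"
  shows "U \<inter> X v \<noteq> {}"
proof -
  obtain w where w: "w \<in> W" "x \<in> X w"
    using openin_subset[OF U] \<open>x \<in> U\<close> by (auto simp: topspace_XF)
  then have "R w v" "v \<in> W"
    using assms(3) R_in_W XF_map_eq by auto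
  have x: "x \<in> U \<inter> topspace (T (cluster_of W R w))"
    using w \<open>x \<in> U\<close> by (simp add: mem_topspace_block_iff cluster_of_self)
  have U_XF: "XF_open W R X T U"
    using U by (simp add: openin_XF_top)
  show ?thesis
  proof (cases "R v w")
    case True
    then have "v \<in> cluster_of W R w"
      using \<open>R w v\<close> \<open>v \<in> W\<close> by (simp add: cluster_of_def)
    then have same: "cluster_of W R v = cluster_of W R w"
      using cluster_of_eq trans_frame by metis
    have "R v v"
      using True \<open>R w v\<close> R_trans by blast
    then have "T (cluster_of W R w) closure_of X v = topspace (T (cluster_of W R w))"
      using cell_dense \<open>v \<in> W\<close> same by metis
    then have "\<forall>S. openin (T (cluster_of W R w)) S \<and> S \<noteq> {} \<longrightarrow> X v \<inter> S \<noteq> {}"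
      by (simp only: dense_intersects_open)
    moreover have "openin (T (cluster_of W R w)) (U \<inter> topspace (T (cluster_of W R w)))"
      by (rule XF_open_trace[OF U_XF cluster_of_in_clusters[OF w(1)]])
    ultimately have "X v \<inter> (U \<inter> topspace (T (cluster_of W R w))) \<noteq> {}"
      using x by blast
    then show ?thesis
      by blast
  next
    case False
    then have "cluster_rel_strict R (cluster_of W R w) (cluster_of W R v)"
      using \<open>R w v\<close> w(1) \<open>v \<in> W\<close> by (simp add: cluster_rel_strict_cluster_of[OF trans_frame])
    moreover have "U \<inter> topspace (T (cluster_of W R w)) \<noteq> {}"
      using x by blast
    ultimately have "topspace (T (cluster_of W R v)) \<subseteq> U"
      using XF_open_contains_later_blocks[OF U_XF cluster_of_in_clusters[OF w(1)] _
          cluster_of_in_clusters[OF \<open>v \<in> W\<close>]]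
      by blast
    then have "X v \<subseteq> U"
      using \<open>v \<in> W\<close> cluster_of_self[of v W R] by (auto simp: topspace_block)
    then show ?thesis
      using cell_nonempty \<open>v \<in> W\<close> by blast
  qed
qed

lemma open_map_XF_map: "open_map XF (alexandrov_top W R) f"
  unfolding open_map_def openin_alexandrov_top
proof (intro allI impI conjI)
  fix U assume U: "openin XF U"
  then show "f ` U \<subseteq> W"
    using openin_subset XF_map_image by blast
  fix w v assume "w \<in> f ` U" "R w v"
  then obtain x where "x \<in> U" "R (f x) v"
    by blast
  then obtain y where "y \<in> U" "y \<in> X v"
    using open_set_meets_successor_cells[OF U] by blast
  then show "v \<in> f ` U"
    using XF_map_eq R_in_W \<open>R w v\<close> by (metis image_eqI)
qed

lemma crowded_in_cell: "w \<in> W \<Longrightarrow> R w w \<Longrightarrow> crowded_in XF (X w)"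
proof (rule crowded_in_subspace_coarser[where Z = "T (cluster_of W R w)"])
  assume "w \<in> W"
  then show "topspace (T (cluster_of W R w)) \<subseteq> topspace XF"
    using cluster_of_in_clusters[of w W R] by (auto simp: topspace_XF_top)
  show "openin (T (cluster_of W R w)) (U \<inter> topspace (T (cluster_of W R w)))"
    if "openin XF U" for U
    using that \<open>w \<in> W\<close> cluster_of_in_clusters[of w W R] by (simp add: openin_XF_top XF_open_trace)
  show "X w \<subseteq> topspace (T (cluster_of W R w))"
    using \<open>w \<in> W\<close> cluster_of_self[of w W R] by (auto simp: topspace_block)
qed (rule cell_crowded)

lemma d_morphism_XF_map: "d_morphism XF W R f"
  unfolding d_morphism_def
proof (intro conjI ballI impI)
  fix w assume "w \<in> W" "\<not> R w w"
  then obtain a where "X w = {a}"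
    using cell_singleton by blast
  then show "{x \<in> topspace XF. f x = w} \<inter> XF derived_set_of {x \<in> topspace XF. f x = w} = {}"
    using \<open>w \<in> W\<close> not_in_derived_set_of_sing by (simp add: fibre_XF_map)
qed (simp_all add: continuous_map_XF_map open_map_XF_map fibre_XF_map crowded_in_cell)

end

theorem lemma3:
  fixes W :: "'w set" and R :: "'w \<Rightarrow> 'w \<Rightarrow> bool"
    and X :: "'w \<Rightarrow> 'a set" and T :: "'w set \<Rightarrow> 'a topology"
  assumes "finite W" and "trans_frame W R"
    and "admissible_choice W R X T"
  shows "d_morphism (XF_top W R X T) W R (XF_map W X) \<and>
         XF_map W X ` topspace (XF_top W R X T) = W"
proof -
  interpret XF_construction W R X T
    using assms(2,3) by unfold_locales
  show ?thesis
    using d_morphism_XF_map XF_map_image by blast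
qed

end
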